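(* A reaction network $(X,\mathscr{R})$ admits a sum formula realization if and only if it is conservative.
   Context: A reaction network (RN) $(X,\mathscr{R})$ consists of a finite non-empty set $X$ of species and a finite non-empty set $\mathscr{R}$ of reactions. Each reaction $r$ is given by stoichiometric coefficients $s^-_{xr},s^+_{xr}\in\mathbb{N}_0$. The stoichiometric matrix $S\in\mathbb{Z}^{X\times\mathscr{R}}$ has entries $S_{xr}=s^+_{xr}-s^-_{xr}$. The paper assumes throughout that RNs are closed: every reaction $r$ has $x,y$ with $S_{xr}<0<S_{yr}$. The RN is conservative if there is $m\in\mathbb{R}^X$ with all entries positive and $m^\top S=0$. A sum formula realization (sf-realization) is a matrix $A\in\mathbb{N}_0^{\mathcal{A}\times X}$, for some non-empty finite set $\mathcal{A}$ of "atoms", such that: - (i) every column of $A$ is nonzero; - (ii) $\operatorname{im}A^\top=\ker S^\top$ as subspaces of $\mathbb{R}^X$. *)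

theory Defs
  imports Complex_Main
begin

text \<open>A reaction network: species form the finite type 'x (X = UNIV, nonempty automatically),
reactions form the finite type 'r. smin x r and splus x r are the stoichiometric
coefficients s^-_{xr}, s^+_{xr} in N_0.\<close>

definition stoich :: "('x \<Rightarrow> 'r \<Rightarrow> nat) \<Rightarrow> ('x \<Rightarrow> 'r \<Rightarrow> nat) \<Rightarrow> 'x \<Rightarrow> 'r \<Rightarrow> int" where
  "stoich smin splus x r = int (splus x r) - int (smin x r)"

definition closed_RN :: "('x \<Rightarrow> 'r \<Rightarrow> nat) \<Rightarrow> ('x \<Rightarrow> 'r \<Rightarrow> nat) \<Rightarrow> bool" where
  "closed_RN smin splus \<longleftrightarrow>
     (\<forall>r. \<exists>x y. stoich smin splus x r < 0 \<and> 0 < stoich smin splus y r)"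

definition kerST :: "('x::finite \<Rightarrow> 'r \<Rightarrow> nat) \<Rightarrow> ('x \<Rightarrow> 'r \<Rightarrow> nat) \<Rightarrow> ('x \<Rightarrow> real) set" where
  "kerST smin splus = {v. \<forall>r. (\<Sum>x\<in>UNIV. v x * real_of_int (stoich smin splus x r)) = 0}"

definition conservative :: "('x::finite \<Rightarrow> 'r \<Rightarrow> nat) \<Rightarrow> ('x \<Rightarrow> 'r \<Rightarrow> nat) \<Rightarrow> bool" where
  "conservative smin splus \<longleftrightarrow>
     (\<exists>m :: 'x \<Rightarrow> real. (\<forall>x. 0 < m x) \<and> m \<in> kerST smin splus)"

definition imAT :: "nat set \<Rightarrow> (nat \<Rightarrow> 'x \<Rightarrow> nat) \<Rightarrow> ('x \<Rightarrow> real) set" where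
  "imAT Atoms A = {v. \<exists>c :: nat \<Rightarrow> real. v = (\<lambda>x. \<Sum>a\<in>Atoms. c a * real (A a x))}"

definition sf_realization ::
  "('x::finite \<Rightarrow> 'r \<Rightarrow> nat) \<Rightarrow> ('x \<Rightarrow> 'r \<Rightarrow> nat) \<Rightarrow> nat set \<Rightarrow> (nat \<Rightarrow> 'x \<Rightarrow> nat) \<Rightarrow> bool" where
  "sf_realization smin splus Atoms A \<longleftrightarrow>
     finite Atoms \<and> Atoms \<noteq> {} \<and>
     (\<forall>x. \<exists>a\<in>Atoms. A a x \<noteq> 0) \<and>
     imAT Atoms A = kerST smin splus"

definition admits_sf_realization :: "('x::finite \<Rightarrow> 'r \<Rightarrow> nat) \<Rightarrow> ('x \<Rightarrow> 'r \<Rightarrow> nat) \<Rightarrow> bool" where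
  "admits_sf_realization smin splus \<longleftrightarrow> (\<exists>Atoms A. sf_realization smin splus Atoms A)"

end

theory Submission imports Defs begin

(* Since S is an integer matrix, ker S^T is spanned by finitely many integer vectors: intersect
   the hyperplanes orthogonal to the columns of S one at a time, eliminating with integer
   combinations. A positive conservation law m in ker S^T, written in these generators, can be
   scaled and its coefficients rounded down to give a positive integer vector p in the span.
   Adding a large multiple of p to each generator makes all generators nonnegative without
   changing their span; they are the rows of A, and p makes every column nonzero. Conversely,
   the sum of the rows of a realization A is a positive vector in im A^T = ker S^T. *)

definition of_int_vec :: "('x \<Rightarrow> int) \<Rightarrow> 'x \<Rightarrow> real" where
  "of_int_vec u = (\<lambda>x. real_of_int (u x))"

definition lin_comb :: "(nat \<Rightarrow> real) \<Rightarrow> ('x \<Rightarrow> int) list \<Rightarrow> 'x \<Rightarrow> real" where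
  "lin_comb c L = (\<lambda>x. \<Sum>i<length L. c i * real_of_int ((L!i) x))"

definition int_list_span :: "('x \<Rightarrow> int) list \<Rightarrow> ('x \<Rightarrow> real) set" where
  "int_list_span L = range (\<lambda>c. lin_comb c L)"

definition dot :: "('x::finite \<Rightarrow> 'a::comm_ring_1) \<Rightarrow> ('x \<Rightarrow> 'a) \<Rightarrow> 'a" where
  "dot u v = (\<Sum>x\<in>UNIV. u x * v x)"

lemma int_list_span_member:
  assumes "u \<in> set L"
  shows "of_int_vec u \<in> int_list_span L"
proof -
  obtain i where i: "i < length L" "u = L!i" using assms by (auto simp: in_set_conv_nth)
  have "of_int_vec u = lin_comb (\<lambda>k. if k = i then 1 else 0) L"
    using i by (simp add: lin_comb_def of_int_vec_def if_distrib[of "\<lambda>a. a * _"] cong: if_cong)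
  then show ?thesis unfolding int_list_span_def by blast
qed

lemma int_list_span_scaled_add:
  assumes "v \<in> int_list_span L" "w \<in> int_list_span L"
  shows "(\<lambda>x. a * v x + b * w x) \<in> int_list_span L"
proof -
  obtain c d where "v = lin_comb c L" "w = lin_comb d L"
    using assms unfolding int_list_span_def by auto
  then have "(\<lambda>x. a * v x + b * w x) = lin_comb (\<lambda>i. a * c i + b * d i) L"
    by (simp add: lin_comb_def sum_distrib_left sum.distrib algebra_simps)
  then show ?thesis unfolding int_list_span_def by blast
qed

lemma int_list_span_subset:
  assumes "\<forall>u\<in>set L'. of_int_vec u \<in> int_list_span L"
  shows "int_list_span L' \<subseteq> int_list_span L"
proof
  fix v assume "v \<in> int_list_span L'"
  then obtain c where c: "v = lin_comb c L'" unfolding int_list_span_def by auto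
  have "\<forall>j<length L'. \<exists>d. of_int_vec (L'!j) = lin_comb d L"
    using assms unfolding int_list_span_def by (auto simp: image_iff)
  then obtain D where D: "\<And>j. j < length L' \<Longrightarrow> of_int_vec (L'!j) = lin_comb (D j) L"
    by metis
  have "v = lin_comb (\<lambda>i. \<Sum>j<length L'. c j * D j i) L"
  proof
    fix x
    have "v x = (\<Sum>j<length L'. c j * of_int_vec (L'!j) x)"
      by (simp add: c lin_comb_def of_int_vec_def)
    also have "\<dots> = (\<Sum>j<length L'. c j * (\<Sum>i<length L. D j i * real_of_int ((L!i) x)))"
      by (intro sum.cong refl) (simp add: D lin_comb_def)
    also have "\<dots> = lin_comb (\<lambda>i. \<Sum>j<length L'. c j * D j i) L x"
      by (simp add: lin_comb_def sum_distrib_left sum_distrib_right mult.assoc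
          sum.swap[of _ "{..<length L'}"])
    finally show "v x = \<dots>" .
  qed
  then show "v \<in> int_list_span L" unfolding int_list_span_def by blast
qed

lemma dot_lin_comb:
  "dot (lin_comb c L) (of_int_vec s) = (\<Sum>i<length L. c i * real_of_int (dot (L!i) s))"
  unfolding dot_def lin_comb_def of_int_vec_def
  by (simp add: sum_distrib_left sum_distrib_right mult.assoc sum.swap[of _ UNIV])

lemma dot_diff_scaled: "dot (\<lambda>x. a * u x - b * w x) s = a * dot u s - b * dot w s"
  by (simp add: dot_def sum_subtractf sum_distrib_left algebra_simps)

lemma int_list_span_subset_hyperplane:
  assumes "\<forall>u\<in>set L. dot u s = 0"
  shows "int_list_span L \<subseteq> {v. dot v (of_int_vec s) = 0}"
  using assms by (auto simp: int_list_span_def dot_lin_comb)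

lemma int_list_span_eliminate:
  assumes j: "j < length L" and d: "dot (L!j) s \<noteq> 0"
  shows "int_list_span (map (\<lambda>u x. dot (L!j) s * u x - dot u s * (L!j) x) L)
       = int_list_span L \<inter> {v. dot v (of_int_vec s) = 0}"
    (is "int_list_span ?L' = _")
proof (intro equalityI Int_greatest)
  let ?d = "dot (L!j) s"
  have "of_int_vec (\<lambda>x. ?d * u x - dot u s * (L!j) x) \<in> int_list_span L" if "u \<in> set L" for u
  proof -
    have "(\<lambda>x. of_int ?d * of_int_vec u x + (- of_int (dot u s)) * of_int_vec (L!j) x) \<in> int_list_span L"
      using that j by (intro int_list_span_scaled_add int_list_span_member) auto
    then show ?thesis by (simp add: of_int_vec_def)
  qed
  then show "int_list_span ?L' \<subseteq> int_list_span L"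
    by (intro int_list_span_subset) auto
  have "dot (\<lambda>x. ?d * u x - dot u s * (L!j) x) s = 0" for u
    by (simp add: dot_diff_scaled)
  then show "int_list_span ?L' \<subseteq> {v. dot v (of_int_vec s) = 0}"
    by (intro int_list_span_subset_hyperplane) auto
  show "int_list_span L \<inter> {v. dot v (of_int_vec s) = 0} \<subseteq> int_list_span ?L'"
  proof
    fix v assume v: "v \<in> int_list_span L \<inter> {v. dot v (of_int_vec s) = 0}"
    then obtain c where c: "v = lin_comb c L" unfolding int_list_span_def by auto
    have v_orth: "(\<Sum>i<length L. c i * real_of_int (dot (L!i) s)) = 0"
      using v by (simp add: c dot_lin_comb)
    have "v = lin_comb (\<lambda>i. c i / of_int ?d) ?L'"
    proof
      fix x
      have "lin_comb (\<lambda>i. c i / of_int ?d) ?L' x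
          = (\<Sum>i<length L. c i * real_of_int ((L!i) x)
               - c i * real_of_int (dot (L!i) s) * (real_of_int ((L!j) x) / of_int ?d))"
        using d by (auto simp: lin_comb_def field_simps intro: sum.cong)
      also have "\<dots> = v x - (\<Sum>i<length L. c i * real_of_int (dot (L!i) s))
                          * (real_of_int ((L!j) x) / of_int ?d)"
        by (simp add: sum_subtractf sum_distrib_right sum_divide_distrib c lin_comb_def)
      also have "\<dots> = v x" by (simp add: v_orth)
      finally show "v x = lin_comb (\<lambda>i. c i / of_int ?d) ?L' x" by simp
    qed
    then show "v \<in> int_list_span ?L'" unfolding int_list_span_def by blast
  qed
qed

lemma int_list_span_Int_hyperplane:
  "\<exists>L'. int_list_span L' = int_list_span L \<inter> {v. dot v (of_int_vec s) = 0}"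
proof (cases "\<forall>u\<in>set L. dot u s = 0")
  case True
  then show ?thesis using int_list_span_subset_hyperplane by blast
next
  case False
  then obtain j where "j < length L" "dot (L!j) s \<noteq> 0" by (auto simp: in_set_conv_nth)
  then show ?thesis using int_list_span_eliminate by blast
qed

lemma int_list_span_UNIV: "\<exists>L :: ('x::finite \<Rightarrow> int) list. int_list_span L = UNIV"
proof -
  obtain xs :: "'x list" where xs: "set xs = UNIV" "distinct xs"
    using finite_distinct_list[of "UNIV :: 'x set"] by auto
  define L :: "('x \<Rightarrow> int) list" where "L = map (\<lambda>y x. if x = y then 1 else 0) xs"
  have "v = lin_comb (\<lambda>i. v (xs!i)) L" for v
  proof
    fix x
    have "lin_comb (\<lambda>i. v (xs!i)) L x = (\<Sum>i<length xs. if x = xs!i then v (xs!i) else 0)"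
      unfolding lin_comb_def L_def by (intro sum.cong) auto
    also have "\<dots> = (\<Sum>y\<in>UNIV. if x = y then v y else 0)"
      using sum.reindex_bij_betw[OF bij_betw_nth[OF xs(2) refl refl],
          of "\<lambda>y. if x = y then v y else 0"] xs(1) by simp
    finally show "v x = lin_comb (\<lambda>i. v (xs!i)) L x" by simp
  qed
  then show ?thesis unfolding int_list_span_def by blast
qed

lemma int_list_span_Int_hyperplanes:
  fixes S :: "'r \<Rightarrow> 'x::finite \<Rightarrow> int"
  assumes "finite R"
  shows "\<exists>L. int_list_span L = {v. \<forall>r\<in>R. dot v (of_int_vec (S r)) = 0}"
  using assms
proof (induction R rule: finite_induct)
  case empty
  then show ?case using int_list_span_UNIV by simp
next
  case (insert r R)
  then obtain L where "int_list_span L = {v. \<forall>r\<in>R. dot v (of_int_vec (S r)) = 0}" by blast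
  then show ?case using int_list_span_Int_hyperplane[of L "S r"] by auto
qed

lemma kerST_eq_int_list_span:
  fixes smin splus :: "'x::finite \<Rightarrow> 'r::finite \<Rightarrow> nat"
  shows "\<exists>L. int_list_span L = kerST smin splus"
proof -
  have "kerST smin splus = {v. \<forall>r\<in>UNIV. dot v (of_int_vec (\<lambda>x. stoich smin splus x r)) = 0}"
    by (simp add: kerST_def dot_def of_int_vec_def)
  then show ?thesis
    using int_list_span_Int_hyperplanes[of UNIV "\<lambda>r x. stoich smin splus x r"] by simp
qed

lemma int_list_span_pos_int_vec:
  fixes L :: "('x::finite \<Rightarrow> int) list"
  assumes m: "m \<in> int_list_span L" and pos: "\<forall>x. 0 < m x"
  shows "\<exists>p. of_int_vec p \<in> int_list_span L \<and> (\<forall>x. 0 < p x)"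
proof -
  obtain c where c: "m = lin_comb c L" using m unfolding int_list_span_def by auto
  define \<delta> where "\<delta> = Min (range m)"
  have \<delta>_pos: "\<delta> > 0" unfolding \<delta>_def using pos by (subst Min_gr_iff) auto
  have \<delta>_le: "\<delta> \<le> m x" for x unfolding \<delta>_def by (rule Min_le) auto
  define T where "T = (\<Sum>y\<in>UNIV. \<Sum>i<length L. \<bar>real_of_int ((L!i) y)\<bar>)"
  have T_ge: "(\<Sum>i<length L. \<bar>real_of_int ((L!i) x)\<bar>) \<le> T" for x
    unfolding T_def by (rule member_le_sum) (auto intro: sum_nonneg)
  define N :: nat where "N = nat \<lceil>T / \<delta>\<rceil> + 1"
  have "T < real N * \<delta>"
    using real_nat_ceiling_ge[of "T / \<delta>"] \<delta>_pos by (simp add: N_def field_simps)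
  define k where "k i = \<lfloor>real N * c i\<rfloor>" for i
  define p where "p x = (\<Sum>i<length L. k i * (L!i) x)" for x
  have "of_int_vec p = lin_comb (\<lambda>i. of_int (k i)) L"
    by (simp add: of_int_vec_def p_def lin_comb_def)
  then have "of_int_vec p \<in> int_list_span L" unfolding int_list_span_def by blast
  moreover have "0 < p x" for x
  proof -
    have round: "(real N * c i - of_int (k i)) * l \<le> \<bar>l\<bar>" for i and l :: real
    proof -
      have ge0: "0 \<le> real N * c i - of_int (k i)" and le1: "real N * c i - of_int (k i) \<le> 1"
        unfolding k_def by linarith+
      have "(real N * c i - of_int (k i)) * l \<le> (real N * c i - of_int (k i)) * \<bar>l\<bar>"
        by (intro mult_left_mono abs_ge_self ge0)
      also have "\<dots> \<le> \<bar>l\<bar>"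
        by (intro mult_left_le_one_le ge0 le1 abs_ge_zero)
      finally show ?thesis .
    qed
    have "real N * m x - of_int (p x)
        = (\<Sum>i<length L. (real N * c i - of_int (k i)) * real_of_int ((L!i) x))"
      by (simp add: c p_def lin_comb_def sum_distrib_left sum_subtractf algebra_simps)
    also have "\<dots> \<le> (\<Sum>i<length L. \<bar>real_of_int ((L!i) x)\<bar>)"
      by (intro sum_mono round)
    also have "\<dots> < real N * \<delta>" using T_ge \<open>T < real N * \<delta>\<close> by (rule le_less_trans)
    also have "\<dots> \<le> real N * m x" by (intro mult_left_mono \<delta>_le) auto
    finally show ?thesis by simp
  qed
  ultimately show ?thesis by blast
qed

lemma int_list_span_nonneg_generators:
  fixes L :: "('x::finite \<Rightarrow> int) list"
  assumes p: "of_int_vec p \<in> int_list_span L" and p_pos: "\<forall>x. 0 < p x"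
  shows "\<exists>L'. int_list_span L' = int_list_span L \<and>
               (\<forall>u\<in>set L'. \<forall>x. 0 \<le> u x) \<and> (\<forall>x. \<exists>u\<in>set L'. 0 < u x)"
proof -
  define shift where "shift u = (\<lambda>x. u x + (\<Sum>y\<in>UNIV. \<bar>u y\<bar>) * p x)" for u :: "'x \<Rightarrow> int"
  define L' where "L' = p # map shift L"
  have "shift u x \<ge> 0" for u x
  proof -
    have "\<bar>u x\<bar> \<le> (\<Sum>y\<in>UNIV. \<bar>u y\<bar>)" by (rule member_le_sum) auto
    also have "\<dots> \<le> (\<Sum>y\<in>UNIV. \<bar>u y\<bar>) * p x"
      using mult_left_mono[of 1 "p x" "\<Sum>y\<in>UNIV. \<bar>u y\<bar>"] p_pos[rule_format, of x]
      by (simp add: sum_nonneg)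
    finally show ?thesis unfolding shift_def by linarith
  qed
  then have "\<forall>u\<in>set L'. \<forall>x. 0 \<le> u x" using p_pos by (auto simp: L'_def less_imp_le)
  moreover have "\<forall>x. \<exists>u\<in>set L'. 0 < u x" using p_pos by (auto simp: L'_def)
  moreover have "int_list_span L' = int_list_span L"
  proof
    have "of_int_vec (shift u) \<in> int_list_span L" if "u \<in> set L" for u
    proof -
      have "(\<lambda>x. 1 * of_int_vec u x + of_int (\<Sum>y\<in>UNIV. \<bar>u y\<bar>) * of_int_vec p x) \<in> int_list_span L"
        by (rule int_list_span_scaled_add[OF int_list_span_member[OF that] p])
      then show ?thesis by (simp add: shift_def of_int_vec_def)
    qed
    then show "int_list_span L' \<subseteq> int_list_span L"
      using p by (intro int_list_span_subset) (auto simp: L'_def)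
    have "of_int_vec u \<in> int_list_span L'" if "u \<in> set L" for u
    proof -
      have "(\<lambda>x. 1 * of_int_vec (shift u) x + (- of_int (\<Sum>y\<in>UNIV. \<bar>u y\<bar>)) * of_int_vec p x)
            \<in> int_list_span L'"
        using that by (intro int_list_span_scaled_add int_list_span_member) (auto simp: L'_def)
      then show ?thesis by (simp add: shift_def of_int_vec_def)
    qed
    then show "int_list_span L \<subseteq> int_list_span L'"
      by (intro int_list_span_subset) auto
  qed
  ultimately show ?thesis by blast
qed

lemma sf_realization_of_nonneg_generators:
  fixes L :: "('x::finite \<Rightarrow> int) list"
  assumes span: "int_list_span L = kerST smin splus"
    and nonneg: "\<forall>u\<in>set L. \<forall>x. 0 \<le> u x" and pos: "\<forall>x. \<exists>u\<in>set L. 0 < u x"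
  shows "sf_realization smin splus {..<length L} (\<lambda>a x. nat ((L!a) x))"
proof -
  have "(\<lambda>x. \<Sum>a\<in>{..<length L}. c a * real (nat ((L!a) x))) = lin_comb c L" for c
    using nonneg by (auto simp: lin_comb_def intro!: sum.cong)
  then have "imAT {..<length L} (\<lambda>a x. nat ((L!a) x)) = int_list_span L"
    unfolding imAT_def int_list_span_def by auto
  moreover have "\<exists>a\<in>{..<length L}. nat ((L!a) x) \<noteq> 0" for x
  proof -
    obtain a where "a < length L" "0 < (L!a) x" using pos by (metis in_set_conv_nth)
    then show ?thesis by (intro bexI[of _ a]) auto
  qed
  moreover have "L \<noteq> []" using pos by auto
  then have "{..<length L} \<noteq> {}" by (metis length_greater_0_conv lessThan_iff emptyE)
  ultimately show ?thesis using span by (simp add: sf_realization_def)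
qed

lemma conservative_if_sf_realization:
  assumes sf: "sf_realization smin splus Atoms A"
  shows "conservative smin splus"
proof -
  define m where "m x = (\<Sum>a\<in>Atoms. real (A a x))" for x
  have "m \<in> imAT Atoms A" unfolding imAT_def m_def by (auto intro!: exI[of _ "\<lambda>_. 1"])
  then have "m \<in> kerST smin splus" using sf unfolding sf_realization_def by simp
  moreover have "0 < m x" for x
  proof -
    obtain a where "a \<in> Atoms" "A a x \<noteq> 0" using sf unfolding sf_realization_def by blast
    then show ?thesis unfolding m_def using sf
      by (intro sum_pos2[of Atoms a]) (auto simp: sf_realization_def)
  qed
  ultimately show ?thesis unfolding conservative_def by blast
qed

lemma admits_sf_realization_if_conservative:
  fixes smin splus :: "'x::finite \<Rightarrow> 'r::finite \<Rightarrow> nat"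
  assumes "conservative smin splus"
  shows "admits_sf_realization smin splus"
proof -
  obtain m where "\<forall>x. 0 < m x" "m \<in> kerST smin splus"
    using assms unfolding conservative_def by blast
  moreover obtain L where L: "int_list_span L = kerST smin splus"
    using kerST_eq_int_list_span by blast
  ultimately obtain p where "of_int_vec p \<in> int_list_span L" "\<forall>x. 0 < p x"
    using int_list_span_pos_int_vec by blast
  then obtain L' where "int_list_span L' = kerST smin splus"
      "\<forall>u\<in>set L'. \<forall>x. 0 \<le> u x" "\<forall>x. \<exists>u\<in>set L'. 0 < u x"
    using int_list_span_nonneg_generators L by metis
  then show ?thesis
    unfolding admits_sf_realization_def by (blast intro: sf_realization_of_nonneg_generators)
qed

theorem proposition10:
  fixes smin splus :: "'x::finite \<Rightarrow> 'r::finite \<Rightarrow> nat"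
  assumes "closed_RN smin splus"
  shows "admits_sf_realization smin splus \<longleftrightarrow> conservative smin splus"
  using admits_sf_realization_if_conservative conservative_if_sf_realization
  unfolding admits_sf_realization_def by blast

end
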